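(* Let $\mathbb{F}_q$ be the finite field with $q$ elements and characteristic $p$, let $m$ be a positive integer dividing $q-1$, and let $k$ be an integer with $0\le k\le q-1$. For $b\in\mathbb{F}_q$ let $N_m^*(k,b)$ be the number of $k$-tuples $(x_1,\dots,x_k)\in(\mathbb{F}_q^* )^k$ with pairwise distinct coordinates satisfying $x_1^m+x_2^m+\cdots+x_k^m=b$. Then for all $b\in\mathbb{F}_q^*$, $$\left|N_m^*(k,b)-\frac{(q-1)_k}{q}\right|\le\frac{2}{\sqrt q}\left(m\sqrt q+k+\frac qp\right)_k,$$ and for $b=0$, $$\left|N_m^*(k,0)-\frac{(q-1)_k}{q}\right|\le\left(m\sqrt q+k+\frac qp\right)_k.$$
   Context: For a real number $t$ and a nonnegative integer $k$, $(t)_k=t(t-1)\cdots(t-k+1)$ (with $(t)_0=1$). *)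

theory Defs
  imports Complex_Main "HOL-Library.Cardinality"
begin

definition falling_fact :: "real \<Rightarrow> nat \<Rightarrow> real" where
  "falling_fact t k = (\<Prod>i<k. (t - real i))"

definition Nstar :: "nat \<Rightarrow> nat \<Rightarrow> 'a::{finite,field} \<Rightarrow> nat" where
  "Nstar m k b = card {xs :: 'a list. length xs = k \<and> distinct xs \<and> 0 \<notin> set xs
                        \<and> (\<Sum>x\<leftarrow>xs. x ^ m) = b}"

end

theory Submission
  imports Defs "HOL-Computational_Algebra.Polynomial" "HOL-Combinatorics.Multiset_Permutations"
    "HOL-Number_Theory.Cong" "HOL-Library.Real_Mod"
begin

text \<open>
  Detecting the equation with an additive character \<open>\<psi>\<close>, the number of \<open>k\<close>-subsets of \<open>F\<^sup>*\<close>
  with \<open>x\<^sub>1\<^sup>m + \<dots> + x\<^sub>k\<^sup>m = b\<close> is \<open>q\<^sup>-\<^sup>1 \<Sum>\<^sub>c \<psi>(-c b) e\<^sub>k(c)\<close>, where \<open>e\<^sub>k(c)\<close> is the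
  \<open>k\<close>-th elementary symmetric sum of the values \<open>\<psi>(c x\<^sup>m)\<close>, \<open>x \<noteq> 0\<close>. The term \<open>c = 0\<close> gives the
  main term. Newton's identities express \<open>k e\<^sub>k\<close> through the power sums, which are the Gauss sums
  \<open>G(i c) = \<Sum>\<^bsub>x \<noteq> 0\<^esub> \<psi>(i c x\<^sup>m)\<close>: these equal \<open>q - 1\<close> when \<open>p dvd i\<close> and are at most
  \<open>m \<surd>q\<close> in absolute value otherwise (their mean square over \<open>c\<close> is at most \<open>m q\<close>).
  Since only every \<open>p\<close>-th power sum is large, \<open>|e\<^sub>k(c)|\<close> is at most the \<open>k\<close>-th coefficient of
  \<open>(1 - t)\<^sup>-\<^sup>X\<close> with \<open>X = m \<surd>q + (q - 1) / p\<close>. For \<open>b \<noteq> 0\<close> one first averages over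
  \<open>b (F\<^sup>*)\<^sup>m\<close>, which replaces \<open>\<psi>(-c b)\<close> by the Gauss sum \<open>G(-c b)\<close>; expanding \<open>e\<^sub>k\<close> recursively
  and applying Cauchy-Schwarz to the last remaining Gauss sum against \<open>G(-c b)\<close> gains the
  factor \<open>1 / \<surd>q\<close>. Ordered tuples with distinct entries are \<open>k!\<close> times as many as subsets.
\<close>

section \<open>Newton's identities\<close>

definition esym :: "'b set \<Rightarrow> ('b \<Rightarrow> 'c::comm_ring_1) \<Rightarrow> nat \<Rightarrow> 'c" where
  "esym U g k = (\<Sum>A | A \<subseteq> U \<and> card A = k. \<Prod>x\<in>A. g x)"

definition psum :: "'b set \<Rightarrow> ('b \<Rightarrow> 'c::comm_ring_1) \<Rightarrow> nat \<Rightarrow> 'c" where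
  "psum U g i = (\<Sum>x\<in>U. g x ^ i)"

text \<open>The mixed sums interpolating between \<open>psum\<close> and \<open>esym\<close> in the textbook proof.\<close>
definition esym_psum_mix :: "'b set \<Rightarrow> ('b \<Rightarrow> 'c::comm_ring_1) \<Rightarrow> nat \<Rightarrow> nat \<Rightarrow> 'c" where
  "esym_psum_mix U g i j =
     (\<Sum>B | B \<subseteq> U \<and> card B = j. \<Sum>x\<in>B. g x ^ i * (\<Prod>y\<in>B - {x}. g y))"

lemma esym_psum_mix_0:
  assumes "finite U"
  shows "esym_psum_mix U g i 0 = 0"
proof -
  have "{B. B \<subseteq> U \<and> card B = 0} = {{}}"
    using assms by (auto dest: finite_subset)
  then show ?thesis
    by (simp add: esym_psum_mix_def)
qed

lemma esym_psum_mix_1: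
  assumes "finite U"
  shows "esym_psum_mix U g 1 j = of_nat j * esym U g j"
proof -
  have "(\<Sum>x\<in>B. g x * (\<Prod>y\<in>B - {x}. g y)) = of_nat j * (\<Prod>y\<in>B. g y)"
    if "B \<subseteq> U" "card B = j" for B
  proof -
    have "finite B"
      using assms that(1) by (rule finite_subset[rotated])
    then have "(\<Sum>x\<in>B. g x * (\<Prod>y\<in>B - {x}. g y)) = (\<Sum>x\<in>B. \<Prod>y\<in>B. g y)"
      by (intro sum.cong refl) (simp add: prod.remove)
    then show ?thesis
      using that(2) by simp
  qed
  then show ?thesis
    by (simp add: esym_psum_mix_def esym_def sum_distrib_left)
qed

text \<open>Multiplying a \<open>j\<close>-subset product by \<open>g x ^ i\<close> either adds a new element \<open>x\<close> to the subset
  or raises the exponent of an element already in it.\<close>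
lemma esym_mult_psum:
  assumes U: "finite U"
  shows "esym U g j * psum U g i = esym_psum_mix U g i (Suc j) + esym_psum_mix U g (Suc i) j"
proof -
  define S where "S j = {A. A \<subseteq> U \<and> card A = j}" for j
  have fin_S: "finite (S j)" for j
    unfolding S_def using U by simp
  have fin: "finite A" if "A \<in> S j" for A j
    using that U unfolding S_def by (auto intro: finite_subset)
  have "esym U g j * psum U g i = (\<Sum>A\<in>S j. (\<Prod>y\<in>A. g y) * (\<Sum>x\<in>U. g x ^ i))"
    unfolding esym_def psum_def S_def by (simp add: sum_distrib_right)
  also have "\<dots> = (\<Sum>A\<in>S j. \<Sum>x\<in>U - A. g x ^ i * (\<Prod>y\<in>A. g y))
                 + (\<Sum>A\<in>S j. \<Sum>x\<in>A. g x ^ i * (\<Prod>y\<in>A. g y))"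
  proof -
    have "(\<Sum>x\<in>U. g x ^ i) = (\<Sum>x\<in>U - A. g x ^ i) + (\<Sum>x\<in>A. g x ^ i)" if "A \<in> S j" for A
      using that U unfolding S_def by (metis mem_Collect_eq sum.subset_diff)
    then show ?thesis
      by (simp add: distrib_left sum_distrib_left sum.distrib[symmetric] mult.commute)
  qed
  also have "(\<Sum>A\<in>S j. \<Sum>x\<in>A. g x ^ i * (\<Prod>y\<in>A. g y)) = esym_psum_mix U g (Suc i) j"
    unfolding esym_psum_mix_def S_def[symmetric]
    by (intro sum.cong refl) (auto dest: fin simp: prod.remove mult.assoc)
  also have "(\<Sum>A\<in>S j. \<Sum>x\<in>U - A. g x ^ i * (\<Prod>y\<in>A. g y))
      = (\<Sum>(A, x)\<in>Sigma (S j) (\<lambda>A. U - A). g x ^ i * (\<Prod>y\<in>A. g y))"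
    using fin_S U by (subst sum.Sigma) auto
  also have "\<dots> = (\<Sum>(B, x)\<in>Sigma (S (Suc j)) (\<lambda>B. B). g x ^ i * (\<Prod>y\<in>B - {x}. g y))"
    by (rule sum.reindex_bij_witness[where i = "\<lambda>(B, x). (B - {x}, x)" and j = "\<lambda>(A, x). (insert x A, x)"])
       (auto simp: S_def card_insert_if card_Diff_singleton_if finite_subset[OF _ U])
  also have "\<dots> = esym_psum_mix U g i (Suc j)"
    unfolding esym_psum_mix_def S_def[symmetric] using fin_S fin by (subst sum.Sigma) auto
  finally show ?thesis
    by (simp add: add.commute)
qed

lemma esym_psum_mix_eq:
  assumes "finite U"
  shows "esym_psum_mix U g i j = (\<Sum>l<j. (-1) ^ l * esym U g (j - Suc l) * psum U g (i + l))"
proof (induction j arbitrary: i)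
  case 0
  show ?case
    using esym_psum_mix_0[OF assms] by simp
next
  case (Suc j)
  have "esym_psum_mix U g i (Suc j) = esym U g j * psum U g i - esym_psum_mix U g (Suc i) j"
    using esym_mult_psum[OF assms, of g j i] by (simp add: algebra_simps)
  also have "\<dots> = (\<Sum>l<Suc j. (-1) ^ l * esym U g (Suc j - Suc l) * psum U g (i + l))"
    by (simp only: Suc.IH, subst sum.lessThan_Suc_shift) (simp add: sum_negf[symmetric])
  finally show ?case .
qed

theorem newton_identity:
  assumes "finite U"
  shows "of_nat k * esym U g k = (\<Sum>l<k. (-1) ^ l * esym U g (k - Suc l) * psum U g (Suc l))"
  using esym_psum_mix_eq[OF assms, of g 1 k] esym_psum_mix_1[OF assms, of g k] by simp

section \<open>Nontrivial additive characters of a finite field\<close>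

lemma prime_CHAR_finite_field: "prime CHAR('a::{finite,field})"
  by (rule prime_CHAR_semidom) (rule finite_imp_CHAR_pos, simp)

definition additive_subgroup :: "'a::ab_group_add set \<Rightarrow> bool" where
  "additive_subgroup H \<longleftrightarrow> 0 \<in> H \<and> (\<forall>x\<in>H. \<forall>y\<in>H. x + y \<in> H) \<and> (\<forall>x\<in>H. - x \<in> H)"

lemma additive_subgroup_diff:
  "additive_subgroup H \<Longrightarrow> x \<in> H \<Longrightarrow> y \<in> H \<Longrightarrow> x - y \<in> H"
  unfolding additive_subgroup_def by (metis diff_conv_add_uminus)

lemma additive_subgroup_of_int_mult:
  fixes H :: "'a::ring_1 set"
  assumes H: "additive_subgroup H" and x: "x \<in> H"
  shows "of_int d * x \<in> H"
proof (induction d rule: int_induct[where k = 0])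
  case base
  show ?case
    using H by (simp add: additive_subgroup_def)
next
  case (step1 i)
  then show ?case
    using H x by (simp add: additive_subgroup_def distrib_right)
next
  case (step2 i)
  then show ?case
    using additive_subgroup_diff[OF H step2(2) x] by (simp add: left_diff_distrib)
qed

lemma of_int_mult_mem_imp_CHAR_dvd:
  fixes H :: "'a::{finite,field} set"
  assumes H: "additive_subgroup H" and x: "x \<notin> H" and d: "of_int d * x \<in> H"
  shows "int CHAR('a) dvd d"
proof (rule ccontr)
  assume "\<not> int CHAR('a) dvd d"
  then have "coprime d (int CHAR('a))"
    using prime_CHAR_finite_field[where 'a='a]
    by (metis coprime_commute prime_imp_coprime prime_nat_int_transfer)
  then obtain e where "[d * e = 1] (mod int CHAR('a))"
    using cong_solve_coprime_int by blast
  then have "of_int (d * e) = (1 :: 'a)"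
    by (metis of_int_1 of_int_eq_iff_cong_CHAR)
  then have "x = of_int e * (of_int d * x)"
    by (metis mult.assoc mult.commute mult_1 of_int_mult)
  then show False
    using x additive_subgroup_of_int_mult[OF H d] by metis
qed

lemma exists_maximal_proper_additive_subgroup:
  obtains H :: "'a::{finite,field} set"
  where "additive_subgroup H" "H \<noteq> UNIV" "\<And>H'. additive_subgroup H' \<Longrightarrow> H \<subset> H' \<Longrightarrow> H' = UNIV"
proof -
  let ?S = "{H :: 'a set. additive_subgroup H \<and> H \<noteq> UNIV}"
  have "{0 :: 'a} \<noteq> UNIV"
    by (metis UNIV_I singletonD zero_neq_one)
  then have "{0} \<in> ?S"
    by (auto simp: additive_subgroup_def)
  then obtain H where "H \<in> ?S" "\<forall>H'\<in>?S. H \<subseteq> H' \<longrightarrow> H = H'"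
    using finite_has_maximal[of ?S] by auto
  then show thesis
    by (intro that) auto
qed

lemma maximal_additive_subgroup_span:
  fixes H :: "'a::ring_1 set"
  assumes H: "additive_subgroup H" and x: "x \<notin> H"
    and max: "\<And>H'. additive_subgroup H' \<Longrightarrow> H \<subset> H' \<Longrightarrow> H' = UNIV"
  shows "\<exists>j. y - of_int j * x \<in> H"
proof -
  define H' where "H' = {y. \<exists>j. y - of_int j * x \<in> H}"
  have "additive_subgroup H'"
    unfolding additive_subgroup_def H'_def
  proof safe
    show "\<exists>j. 0 - of_int j * x \<in> H"
      using H by (auto simp: additive_subgroup_def intro: exI[of _ 0])
  next
    fix a b i j assume "a - of_int i * x \<in> H" "b - of_int j * x \<in> H"
    then have "(a - of_int i * x) + (b - of_int j * x) \<in> H"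
      using H by (simp add: additive_subgroup_def)
    then show "\<exists>j. a + b - of_int j * x \<in> H"
      by (intro exI[of _ "i + j"]) (simp add: algebra_simps)
  next
    fix a i assume "a - of_int i * x \<in> H"
    then have "- (a - of_int i * x) \<in> H"
      using H by (simp only: additive_subgroup_def)
    then show "\<exists>j. - a - of_int j * x \<in> H"
      by (intro exI[of _ "- i"]) (simp add: algebra_simps)
  qed
  moreover have "H \<subset> H'"
  proof -
    have "H \<subseteq> H'"
      unfolding H'_def by (auto intro: exI[of _ 0])
    moreover have "x \<in> H'"
      using H unfolding H'_def by (auto simp: additive_subgroup_def intro: exI[of _ 1])
    ultimately show ?thesis
      using x by blast
  qed
  ultimately show ?thesis
    using max unfolding H'_def by blast
qed

lemma cis_2pi_div_cong:
  fixes i j :: int and p :: nat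
  assumes "p > 0" and "int p dvd i - j"
  shows "cis (2 * pi * of_int i / p) = cis (2 * pi * of_int j / p)"
proof -
  obtain t where "i = j + int p * t"
    using assms(2) by (metis add.commute diff_add_cancel dvd_def)
  then have "2 * pi * of_int i / p = 2 * pi * of_int j / p + 2 * pi * of_int t"
    using assms(1) by (simp add: field_simps)
  then show ?thesis
    by (simp add: cis_mult[symmetric])
qed

lemma cis_2pi_div_neq_1:
  assumes "p \<ge> 2"
  shows "cis (2 * pi / real p) \<noteq> 1"
proof
  assume "cis (2 * pi / real p) = 1"
  then obtain n :: int where "(2 * pi) * (1 / real p) = (2 * pi) * of_int n"
    by (auto simp: cis_eq_1_iff)
  then have "1 / real p = of_int n"
    using pi_gt_zero by (simp only: mult_cancel_left) simp
  moreover have "0 < 1 / real p" "1 / real p < 1"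
    using assms by auto
  ultimately have "0 < n" "n < 1"
    by simp_all
  then show False
    by simp
qed

text \<open>For a maximal proper additive subgroup \<open>H\<close> and \<open>x \<notin> H\<close>, the character sends
  \<open>h + j x\<close> to \<open>e^(2\<pi>ij/p)\<close>; it is well defined because \<open>j x \<in> H\<close> forces \<open>p dvd j\<close>.\<close>
theorem exists_nontrivial_additive_character:
  "\<exists>\<psi> :: 'a::{finite,field} \<Rightarrow> complex.
     (\<forall>x y. \<psi> (x + y) = \<psi> x * \<psi> y) \<and> (\<forall>x. norm (\<psi> x) = 1) \<and> (\<exists>x. \<psi> x \<noteq> 1)"
proof -
  obtain H :: "'a set" where H: "additive_subgroup H" "H \<noteq> UNIV"
    and max: "\<And>H'. additive_subgroup H' \<Longrightarrow> H \<subset> H' \<Longrightarrow> H' = UNIV"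
    using exists_maximal_proper_additive_subgroup by blast
  obtain x where x: "x \<notin> H"
    using H(2) by blast
  define p where "p = CHAR('a)"
  have p: "p \<ge> 2"
    unfolding p_def using prime_CHAR_finite_field prime_ge_2_nat by blast
  define j where "j y = (SOME j. y - of_int j * x \<in> H)" for y
  have j: "y - of_int (j y) * x \<in> H" for y
    unfolding j_def using someI_ex[OF maximal_additive_subgroup_span[OF H(1) x max]] .
  define \<psi> where "\<psi> y = cis (2 * pi * of_int (j y) / p)" for y
  have \<psi>_eq: "\<psi> y = cis (2 * pi * of_int i / p)" if "y - of_int i * x \<in> H" for y i
  proof -
    have "(y - of_int i * x) - (y - of_int (j y) * x) = of_int (j y - i) * x"
      by (simp add: algebra_simps)
    then have "of_int (j y - i) * x \<in> H"
      using additive_subgroup_diff[OF H(1) that j[of y]] by metis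
    then show ?thesis
      unfolding \<psi>_def p_def using p unfolding p_def
      by (intro cis_2pi_div_cong of_int_mult_mem_imp_CHAR_dvd[OF H(1) x]) simp_all
  qed
  have "\<psi> (a + b) = \<psi> a * \<psi> b" for a b
  proof -
    have "(a - of_int (j a) * x) + (b - of_int (j b) * x) \<in> H"
      using H(1) j by (simp add: additive_subgroup_def)
    then have "\<psi> (a + b) = cis (2 * pi * of_int (j a + j b) / p)"
      by (intro \<psi>_eq) (simp add: algebra_simps)
    then show ?thesis
      unfolding \<psi>_def by (simp add: cis_mult add_divide_distrib distrib_left)
  qed
  moreover have "norm (\<psi> y) = 1" for y
    by (simp add: \<psi>_def)
  moreover have "\<psi> x = cis (2 * pi / p)"
    using \<psi>_eq[of x 1] H(1) by (simp add: additive_subgroup_def)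
  ultimately show ?thesis
    using cis_2pi_div_neq_1[OF p] by metis
qed

section \<open>Character sums over the multiplicative group\<close>

lemma card_nonzero: "card (- {0 :: 'a::{finite,zero}}) = CARD('a) - 1"
  by (simp add: Compl_eq_Diff_UNIV card_Diff_singleton)

lemma CARD_field_ge_2: "CARD('a::{finite,field}) \<ge> 2"
proof -
  have "card {0 :: 'a, 1} \<le> CARD('a)"
    by (intro card_mono) auto
  then show ?thesis
    by simp
qed

lemma sum_UNIV_split_zero: "(\<Sum>c\<in>UNIV. f c) = f 0 + (\<Sum>c\<in>- {0 :: 'a::{finite,zero}}. f c)"
  by (subst sum.remove[of UNIV 0]) (simp_all add: Compl_eq_Diff_UNIV)

lemma sum_nonzero_mult_reindex:
  fixes h :: "'a::{finite,field} \<Rightarrow> 'b::comm_monoid_add"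
  assumes "u \<noteq> 0"
  shows "(\<Sum>x\<in>- {0}. h (u * x)) = (\<Sum>x\<in>- {0}. h x)"
  by (rule sum.reindex_bij_witness[where i = "\<lambda>x. x / u" and j = "\<lambda>x. u * x"]) (use assms in auto)

lemma card_power_eq_le:
  fixes a :: "'a::idom"
  assumes "m > 0"
  shows "card {y. y ^ m = a} \<le> m"
proof -
  define P where "P = monom 1 m - [:a:]"
  have "coeff P m = 1"
    using assms by (cases m) (simp_all add: P_def)
  then have "P \<noteq> 0"
    by auto
  have "{y. y ^ m = a} = {y. poly P y = 0}"
    by (auto simp: P_def poly_monom)
  also have "card \<dots> \<le> degree P"
    by (rule card_poly_roots_bound[OF \<open>P \<noteq> 0\<close>])
  also have "degree P \<le> m"
    unfolding P_def by (rule degree_diff_le) (simp_all add: degree_monom_le)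
  finally show ?thesis .
qed

lemma card_image_mult_power_ge:
  fixes c :: "'a::{finite,field}"
  assumes "m > 0" and "c \<noteq> 0"
  shows "CARD('a) - 1 \<le> m * card ((\<lambda>t. c * t ^ m) ` (- {0}))"
proof -
  let ?H = "(\<lambda>t. c * t ^ m) ` (- {0})"
  have "card (- {0 :: 'a}) \<le> card (\<Union>h\<in>?H. {t. c * t ^ m = h})"
    by (intro card_mono) auto
  also have "\<dots> \<le> (\<Sum>h\<in>?H. card {t. c * t ^ m = h})"
    by (rule card_UN_le) simp
  also have "\<dots> \<le> (\<Sum>h\<in>?H. m)"
  proof (rule sum_mono)
    fix h
    have "{t. c * t ^ m = h} = {t. t ^ m = h / c}"
      using assms(2) by (auto simp: field_simps)
    then show "card {t. c * t ^ m = h} \<le> m"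
      using card_power_eq_le[OF assms(1)] by simp
  qed
  finally show ?thesis
    by (simp add: card_nonzero mult.commute)
qed

locale additive_character =
  fixes \<psi> :: "'a::{finite,field} \<Rightarrow> complex"
  assumes hom_add: "\<psi> (x + y) = \<psi> x * \<psi> y"
    and norm_eq_1: "norm (\<psi> x) = 1"
    and nontrivial: "\<exists>x. \<psi> x \<noteq> 1"
begin

lemma nonzero: "\<psi> x \<noteq> 0"
  using norm_eq_1[of x] by auto

lemma hom_zero [simp]: "\<psi> 0 = 1"
  using hom_add[of 0 0] nonzero[of 0] by simp

lemma hom_sum: "\<psi> (sum f A) = (\<Prod>x\<in>A. \<psi> (f x))"
  by (induction A rule: infinite_finite_induct) (simp_all add: hom_add)

lemma hom_uminus: "\<psi> (- x) = cnj (\<psi> x)"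
proof -
  have "\<psi> x * \<psi> (- x) = \<psi> x * cnj (\<psi> x)"
    using hom_add[of x "- x"] complex_norm_square[of "\<psi> x"] norm_eq_1[of x] by simp
  then show ?thesis
    using nonzero[of x] by simp
qed

lemma hom_of_nat_mult: "\<psi> (of_nat i * x) = \<psi> x ^ i"
  by (induction i) (simp_all add: hom_add distrib_right)

lemma sum_UNIV: "(\<Sum>x\<in>UNIV. \<psi> x) = 0"
proof -
  obtain a where a: "\<psi> a \<noteq> 1"
    using nontrivial by blast
  have "(\<Sum>x\<in>UNIV. \<psi> (x + a)) = (\<Sum>x\<in>UNIV. \<psi> x)"
    by (rule sum.reindex_bij_witness[where i = "\<lambda>x. x - a" and j = "\<lambda>x. x + a"]) auto
  then have "\<psi> a * (\<Sum>x\<in>UNIV. \<psi> x) = 1 * (\<Sum>x\<in>UNIV. \<psi> x)"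
    by (simp add: hom_add sum_distrib_left mult.commute)
  then show ?thesis
    using a by (metis mult_right_cancel)
qed

lemma orthogonality: "(\<Sum>c\<in>UNIV. \<psi> (c * y)) = (if y = 0 then of_nat CARD('a) else 0)"
proof (cases "y = 0")
  case False
  then have "(\<Sum>c\<in>UNIV. \<psi> (c * y)) = (\<Sum>x\<in>UNIV. \<psi> x)"
    by (intro sum.reindex_bij_witness[where i = "\<lambda>x. x / y" and j = "\<lambda>x. x * y"]) auto
  then show ?thesis
    using False sum_UNIV by simp
qed simp

lemma sum_nonzero_orthogonality: "y \<noteq> 0 \<Longrightarrow> (\<Sum>c\<in>- {0}. \<psi> (c * y)) = - 1"
  using orthogonality[of y] sum_UNIV_split_zero[of "\<lambda>c. \<psi> (c * y)"] by (simp add: eq_neg_iff_add_eq_0 add.commute)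

lemma parseval:
  "(\<Sum>c\<in>UNIV. (cmod (\<Sum>x\<in>U. \<psi> (c * g x)))\<^sup>2)
     = real CARD('a) * (\<Sum>x\<in>U. \<Sum>y\<in>U. if g x = g y then 1 else 0)"
proof -
  have "complex_of_real (\<Sum>c\<in>UNIV. (cmod (\<Sum>x\<in>U. \<psi> (c * g x)))\<^sup>2)
      = (\<Sum>c\<in>UNIV. (\<Sum>x\<in>U. \<psi> (c * g x)) * cnj (\<Sum>x\<in>U. \<psi> (c * g x)))"
    by (simp only: of_real_sum complex_norm_square)
  also have "\<dots> = (\<Sum>c\<in>UNIV. \<Sum>x\<in>U. \<Sum>y\<in>U. \<psi> (c * (g x - g y)))"
    by (simp add: sum_product hom_uminus[symmetric] hom_add[symmetric] algebra_simps)
  also have "\<dots> = (\<Sum>x\<in>U. \<Sum>y\<in>U. \<Sum>c\<in>UNIV. \<psi> (c * (g x - g y)))"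
    by (subst sum.swap) (simp add: sum.swap[of _ UNIV])
  also have "\<dots> = complex_of_real (real CARD('a) * (\<Sum>x\<in>U. \<Sum>y\<in>U. if g x = g y then 1 else 0))"
    by (simp add: orthogonality sum_distrib_left if_distrib cong: if_cong)
  finally show ?thesis
    by (simp only: of_real_eq_iff)
qed

end

locale power_character_sum = additive_character \<psi> for \<psi> :: "'a::{finite,field} \<Rightarrow> complex" +
  fixes m :: nat
  assumes m_pos: "m > 0"
begin

definition gauss_sum :: "'a \<Rightarrow> complex" where
  "gauss_sum c = (\<Sum>x\<in>- {0}. \<psi> (c * x ^ m))"

lemma gauss_sum_0: "gauss_sum 0 = of_nat (CARD('a) - 1)"
  by (simp add: gauss_sum_def card_nonzero)

lemma gauss_sum_mult_power: "t \<noteq> 0 \<Longrightarrow> gauss_sum (c * t ^ m) = gauss_sum c"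
  unfolding gauss_sum_def
  using sum_nonzero_mult_reindex[of t "\<lambda>x. \<psi> (c * x ^ m)"] by (simp add: power_mult_distrib mult.assoc)

lemma sum_norm_gauss_sum_squared:
  "(\<Sum>c\<in>UNIV. (cmod (gauss_sum c))\<^sup>2) \<le> real CARD('a) * real m * (real CARD('a) - 1)"
proof -
  have fibre: "(\<Sum>y\<in>- {0}. if x ^ m = y ^ m then 1 else 0) \<le> real m" for x :: 'a
  proof -
    have "(\<Sum>y\<in>- {0}. if x ^ m = y ^ m then 1 else 0) = real (card {y \<in> - {0}. y ^ m = x ^ m})"
      by (simp add: sum.If_cases) (rule arg_cong[where f = card], auto)
    also have "card {y \<in> - {0}. y ^ m = x ^ m} \<le> card {y. y ^ m = x ^ m}"
      by (intro card_mono) auto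
    also have "\<dots> \<le> m"
      using m_pos by (rule card_power_eq_le)
    finally show ?thesis
      by simp
  qed
  have "(\<Sum>c\<in>UNIV. (cmod (gauss_sum c))\<^sup>2)
      = real CARD('a) * (\<Sum>x\<in>- {0 :: 'a}. \<Sum>y\<in>- {0}. if x ^ m = y ^ m then 1 else 0)"
    unfolding gauss_sum_def by (rule parseval)
  also have "\<dots> \<le> real CARD('a) * (\<Sum>x\<in>- {0 :: 'a}. real m)"
    by (intro mult_left_mono sum_mono fibre) simp
  also have "\<dots> = real CARD('a) * real m * (real CARD('a) - 1)"
    using CARD_field_ge_2[where 'a='a] by (simp add: card_nonzero of_nat_diff)
  finally show ?thesis .
qed

text \<open>The sum is constant on the coset \<open>c (F\<^sup>*)\<^sup>m\<close>, which has at least \<open>(q - 1) / m\<close> elements,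
  so the second moment bounds each value.\<close>
lemma norm_gauss_sum_le:
  assumes c: "c \<noteq> 0"
  shows "cmod (gauss_sum c) \<le> real m * sqrt (real CARD('a))"
proof -
  define H where "H = (\<lambda>t. c * t ^ m) ` (- {0})"
  have "real (CARD('a) - 1) \<le> real (m * card H)"
    unfolding H_def using card_image_mult_power_ge[OF m_pos c] by linarith
  then have card_H: "real CARD('a) - 1 \<le> real m * real (card H)"
    using CARD_field_ge_2[where 'a='a] by (simp add: of_nat_diff)
  have "(\<Sum>h\<in>H. (cmod (gauss_sum h))\<^sup>2) = (\<Sum>h\<in>H. (cmod (gauss_sum c))\<^sup>2)"
  proof (rule sum.cong[OF refl])
    fix h assume "h \<in> H"
    then obtain t where "t \<noteq> 0" "h = c * t ^ m"
      by (auto simp: H_def)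
    then show "(cmod (gauss_sum h))\<^sup>2 = (cmod (gauss_sum c))\<^sup>2"
      by (simp add: gauss_sum_mult_power)
  qed
  then have "real (card H) * (cmod (gauss_sum c))\<^sup>2 = (\<Sum>h\<in>H. (cmod (gauss_sum h))\<^sup>2)"
    by simp
  also have "\<dots> \<le> (\<Sum>h\<in>UNIV. (cmod (gauss_sum h))\<^sup>2)"
    by (intro sum_mono2) auto
  also have "\<dots> \<le> real CARD('a) * real m * (real m * real (card H))"
    using sum_norm_gauss_sum_squared card_H
    by (smt (verit) mult_left_mono of_nat_0_le_iff zero_le_mult_iff)
  finally have "real (card H) * (cmod (gauss_sum c))\<^sup>2 \<le> real (card H) * (real m * sqrt (real CARD('a)))\<^sup>2"
    by (simp add: power_mult_distrib power2_eq_square algebra_simps)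
  moreover have "card H > 0"
    using c by (auto simp: H_def card_gt_0_iff intro: image_eqI[of _ _ 1])
  ultimately have "(cmod (gauss_sum c))\<^sup>2 \<le> (real m * sqrt (real CARD('a)))\<^sup>2"
    by simp
  then show ?thesis
    by (rule power2_le_imp_le) simp
qed

end

section \<open>A bound for Newton-type recurrences\<close>

definition multichoose :: "real \<Rightarrow> nat \<Rightarrow> real" where
  "multichoose X k = pochhammer X k / fact k"

lemma multichoose_0 [simp]: "multichoose X 0 = 1"
  by (simp add: multichoose_def)

lemma multichoose_Suc: "multichoose X (Suc k) = multichoose X k * (X + real k) / (real k + 1)"
  by (simp add: multichoose_def pochhammer_Suc field_simps)

lemma multichoose_nonneg: "X > 0 \<Longrightarrow> multichoose X k \<ge> 0"
  unfolding multichoose_def by (intro divide_nonneg_nonneg pochhammer_nonneg) simp_all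

lemma multichoose_mono:
  assumes "X \<ge> 1" "i \<le> j"
  shows "multichoose X i \<le> multichoose X j"
  using assms(2)
proof (induction j)
  case (Suc j)
  have "multichoose X j * 1 \<le> multichoose X j * ((X + real j) / (real j + 1))"
    using assms(1) multichoose_nonneg[of X j] by (intro mult_left_mono) simp_all
  then have "multichoose X j \<le> multichoose X (Suc j)"
    by (simp add: multichoose_Suc)
  then show ?case
    using Suc by (cases "i = Suc j") auto
qed simp

lemma multichoose_recurrence: "real k * multichoose X k = X * (\<Sum>l<k. multichoose X l)"
proof (induction k)
  case (Suc k)
  have "real (Suc k) * multichoose X (Suc k) = X * multichoose X k + real k * multichoose X k"
    by (simp add: multichoose_Suc field_simps)
  then show ?case
    using Suc.IH by (simp add: algebra_simps)
qed simp

lemma sum_lessThan_add_split: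
  "(\<Sum>l<a + r. f l) = (\<Sum>l<a. f l) + (\<Sum>i<r. f (a + i :: nat))"
  by (induction r) (simp_all add: add.assoc)

lemma dvd_Suc_mult_add_iff: "(p :: nat) dvd Suc (p * N + i) \<longleftrightarrow> p dvd Suc i"
  by (simp add: dvd_add_right_iff flip: add_Suc_right)

lemma sum_if_Suc_eq: "(\<Sum>i<p. if Suc i = p then c else 0) = (if p = 0 then 0 else c)"
  by (cases p) (simp_all add: sum.lessThan_Suc)

lemma sum_antimono_multiples_le_aligned:
  fixes g :: "nat \<Rightarrow> real"
  assumes antimono: "\<And>i j. i \<le> j \<Longrightarrow> g j \<le> g i"
  shows "real p * (\<Sum>l<p * N. if p dvd Suc l then g (Suc l) else 0) \<le> (\<Sum>l<p * N. g (Suc l))"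
proof (induction N)
  case (Suc N)
  have "(\<Sum>i<p. if p dvd Suc (p * N + i) then g (Suc (p * N + i)) else 0)
      = (\<Sum>i<p. if Suc i = p then g (p * Suc N) else 0)"
  proof (intro sum.cong refl)
    fix i assume "i \<in> {..<p}"
    then have "p dvd Suc (p * N + i) \<longleftrightarrow> Suc i = p"
      by (auto simp: dvd_Suc_mult_add_iff dest: dvd_imp_le)
    moreover have "Suc (p * N + i) = p * Suc N" if "Suc i = p"
      using that by (metis add_Suc_right mult_Suc_right add.commute)
    ultimately show "(if p dvd Suc (p * N + i) then g (Suc (p * N + i)) else 0)
        = (if Suc i = p then g (p * Suc N) else 0)"
      by metis
  qed
  also have "\<dots> = (if p = 0 then 0 else g (p * Suc N))"
    using sum_if_Suc_eq[of p "g (p * Suc N)"] by simp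
  finally have "real p * (\<Sum>i<p. if p dvd Suc (p * N + i) then g (Suc (p * N + i)) else 0)
      = (\<Sum>i<p. g (p * Suc N))"
    by simp
  also have "\<dots> \<le> (\<Sum>i<p. g (Suc (p * N + i)))"
    by (intro sum_mono antimono) simp
  moreover have "p * Suc N = p * N + p"
    by simp
  ultimately show ?case
    using Suc.IH by (simp only: sum_lessThan_add_split distrib_left add_mono)
qed simp

lemma sum_antimono_multiples_le:
  fixes g :: "nat \<Rightarrow> real"
  assumes "\<And>i j. i \<le> j \<Longrightarrow> g j \<le> g i" and "\<And>i. g i \<ge> 0" and "p > 0"
  shows "real p * (\<Sum>l<k. if p dvd Suc l then g (Suc l) else 0) \<le> (\<Sum>l<k. g (Suc l))"
proof -
  define N where "N = k div p"
  have k: "k = p * N + k mod p"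
    by (simp add: N_def)
  have "(\<Sum>i<k mod p. if p dvd Suc (p * N + i) then g (Suc (p * N + i)) else 0) = 0"
    using mod_less_divisor[OF \<open>p > 0\<close>, of k]
    by (intro sum.neutral) (auto simp: dvd_Suc_mult_add_iff dest: dvd_imp_le)
  then have "(\<Sum>l<k. if p dvd Suc l then g (Suc l) else 0) = (\<Sum>l<p * N. if p dvd Suc l then g (Suc l) else 0)"
    by (subst k) (simp only: sum_lessThan_add_split)
  also have "real p * \<dots> \<le> (\<Sum>l<p * N. g (Suc l))"
    using assms(1) by (rule sum_antimono_multiples_le_aligned)
  also have "\<dots> \<le> (\<Sum>l<k. g (Suc l))"
    using assms(2) by (intro sum_mono2) (auto simp: N_def)
  finally show ?thesis .
qed

text \<open>Only every \<open>p\<close>-th coefficient may exceed \<open>C\<close> (by at most \<open>D\<close>); against decreasing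
  weights this excess averages out to \<open>D / p\<close>.\<close>
lemma sum_mult_multichoose_le:
  fixes a :: "nat \<Rightarrow> real" and C D :: real and p :: nat
  defines "X \<equiv> C + D / real p"
  assumes p: "p > 0" and D: "D \<ge> 0" and X: "X \<ge> 1"
    and a: "\<And>i. a i \<le> C + (if p dvd i then D else 0)"
  shows "(\<Sum>l<k. a (Suc l) * multichoose X (k - Suc l)) \<le> real k * multichoose X k"
proof -
  define g where "g i = multichoose X (k - i)" for i
  have g_nonneg: "g i \<ge> 0" for i
    using X unfolding g_def by (intro multichoose_nonneg) simp
  have g_antimono: "g j \<le> g i" if "i \<le> j" for i j
    unfolding g_def using X that by (intro multichoose_mono) auto
  have "(\<Sum>l<k. a (Suc l) * multichoose X (k - Suc l))
      \<le> (\<Sum>l<k. C * g (Suc l) + D * (if p dvd Suc l then g (Suc l) else 0))"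
  proof (rule sum_mono)
    fix l
    have "a (Suc l) * g (Suc l) \<le> (C + (if p dvd Suc l then D else 0)) * g (Suc l)"
      using a g_nonneg by (rule mult_right_mono)
    then show "a (Suc l) * multichoose X (k - Suc l)
        \<le> C * g (Suc l) + D * (if p dvd Suc l then g (Suc l) else 0)"
      by (cases "p dvd Suc l") (simp_all add: g_def algebra_simps)
  qed
  also have "\<dots> = C * (\<Sum>l<k. g (Suc l)) + D / real p * (real p * (\<Sum>l<k. if p dvd Suc l then g (Suc l) else 0))"
    using p by (simp add: sum.distrib sum_distrib_left)
  also have "\<dots> \<le> C * (\<Sum>l<k. g (Suc l)) + D / real p * (\<Sum>l<k. g (Suc l))"
    using D p g_antimono g_nonneg by (intro add_left_mono mult_left_mono sum_antimono_multiples_le) auto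
  also have "\<dots> = X * (\<Sum>l<k. multichoose X l)"
    unfolding g_def X_def by (simp add: sum.nat_diff_reindex algebra_simps)
  finally show ?thesis
    by (simp add: multichoose_recurrence)
qed

lemma pochhammer_le_falling_fact:
  assumes "X \<ge> 0" and "X + real k - 1 \<le> T"
  shows "pochhammer X k \<le> falling_fact T k"
proof -
  have "pochhammer X k = (\<Prod>i<k. X + real i)"
    by (simp add: pochhammer_prod atLeast0LessThan)
  also have "\<dots> = (\<Prod>i<k. X + real (k - Suc i))"
    by (rule prod.nat_diff_reindex[symmetric])
  also have "\<dots> \<le> (\<Prod>i<k. T - real i)"
    using assms by (intro prod_mono) (auto simp: of_nat_diff)
  finally show ?thesis
    by (simp add: falling_fact_def)
qed

section \<open>Counting tuples through subsets\<close>

lemma falling_fact_of_nat: "falling_fact (real n) k = fact k * real (n choose k)"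
  by (simp add: binomial_gbinomial gbinomial_prod_rev falling_fact_def atLeast0LessThan)

definition power_sum_subsets :: "nat \<Rightarrow> nat \<Rightarrow> 'a::{finite,field} \<Rightarrow> 'a set set" where
  "power_sum_subsets m k b = {A. A \<subseteq> - {0} \<and> card A = k \<and> (\<Sum>x\<in>A. x ^ m) = b}"

lemma Nstar_eq_fact_mult_card: "Nstar m k b = fact k * card (power_sum_subsets m k b)"
proof -
  have tuples: "{xs. length xs = k \<and> distinct xs \<and> 0 \<notin> set xs \<and> (\<Sum>x\<leftarrow>xs. x ^ m) = b}
      = (\<Union>A\<in>power_sum_subsets m k b. permutations_of_set A)"
    by (auto simp: power_sum_subsets_def permutations_of_set_def distinct_card sum_list_distinct_conv_sum_set)
  have "Nstar m k b = (\<Sum>A\<in>power_sum_subsets m k b. card (permutations_of_set A))"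
    unfolding Nstar_def tuples by (rule card_UN_disjoint) (auto dest: permutations_of_setD)
  also have "\<dots> = (\<Sum>A\<in>power_sum_subsets m k b. fact k)"
    by (intro sum.cong refl) (simp add: power_sum_subsets_def)
  finally show ?thesis
    by simp
qed

lemma card_power_sum_subsets_le:
  fixes t :: "'a::{finite,field}"
  assumes t: "t \<noteq> 0"
  shows "card (power_sum_subsets m k b) \<le> card (power_sum_subsets m k (t ^ m * b))"
proof (rule card_inj_on_le)
  have inj: "inj ((*) t)"
    using t by (auto intro: injI)
  then show "inj_on ((`) ((*) t)) (power_sum_subsets m k b)"
    by (auto intro: inj_onI simp: inj_image_eq_iff)
  have inj_on: "inj_on ((*) t) A" for A
    using inj by (rule inj_on_subset) simp
  show "(`) ((*) t) ` power_sum_subsets m k b \<subseteq> power_sum_subsets m k (t ^ m * b)"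
    using t by (auto simp: power_sum_subsets_def card_image[OF inj_on] sum.reindex[OF inj_on]
        power_mult_distrib sum_distrib_left)
qed simp

lemma card_power_sum_subsets_mult_power:
  fixes t :: "'a::{finite,field}"
  assumes t: "t \<noteq> 0"
  shows "card (power_sum_subsets m k (t ^ m * b)) = card (power_sum_subsets m k b)"
proof (rule antisym)
  have "card (power_sum_subsets m k (t ^ m * b))
      \<le> card (power_sum_subsets m k (inverse t ^ m * (t ^ m * b)))"
    using t by (intro card_power_sum_subsets_le) simp
  also have "inverse t ^ m * (t ^ m * b) = b"
    using t by (simp add: power_inverse field_simps)
  finally show "card (power_sum_subsets m k (t ^ m * b)) \<le> card (power_sum_subsets m k b)" .
qed (rule card_power_sum_subsets_le[OF t])

section \<open>Elementary symmetric sums of character values\<close>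

context power_character_sum
begin

definition esym_char :: "nat \<Rightarrow> 'a \<Rightarrow> complex" where
  "esym_char k c = esym (- {0}) (\<lambda>x. \<psi> (c * x ^ m)) k"

lemma esym_char_eq: "esym_char k c = (\<Sum>A | A \<subseteq> - {0} \<and> card A = k. \<psi> (c * (\<Sum>x\<in>A. x ^ m)))"
  by (simp add: esym_char_def esym_def hom_sum sum_distrib_left)

lemma esym_char_0 [simp]: "esym_char 0 c = 1"
proof -
  have "{A. A \<subseteq> - {0 :: 'a} \<and> card A = 0} = {{}}"
    by auto
  then show ?thesis
    by (simp add: esym_char_eq)
qed

lemma esym_char_at_0: "esym_char k 0 = of_nat ((CARD('a) - 1) choose k)"
  using n_subsets[of "- {0 :: 'a}" k] by (simp add: esym_char_eq card_nonzero)

lemma newton_esym_char: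
  "of_nat k * esym_char k c
     = (\<Sum>l<k. (-1) ^ l * esym_char (k - Suc l) c * gauss_sum (of_nat (Suc l) * c))"
proof -
  have "psum (- {0}) (\<lambda>x. \<psi> (c * x ^ m)) i = gauss_sum (of_nat i * c)" for i
    by (simp add: psum_def gauss_sum_def hom_of_nat_mult mult.assoc)
  then show ?thesis
    using newton_identity[of "- {0 :: 'a}" k "\<lambda>x. \<psi> (c * x ^ m)"] by (simp add: esym_char_def)
qed

lemma card_power_sum_subsets_eq_sum:
  "of_nat CARD('a) * of_nat (card (power_sum_subsets m k b)) = (\<Sum>c\<in>UNIV. \<psi> (- (c * b)) * esym_char k c)"
proof -
  have "(\<Sum>c\<in>UNIV. \<psi> (- (c * b)) * esym_char k c)
      = (\<Sum>A | A \<subseteq> - {0} \<and> card A = k. \<Sum>c\<in>UNIV. \<psi> (c * ((\<Sum>x\<in>A. x ^ m) - b)))"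
    unfolding esym_char_eq
    by (subst sum.swap) (simp add: sum_distrib_left hom_add[symmetric] algebra_simps)
  also have "\<dots> = (\<Sum>A | A \<subseteq> - {0} \<and> card A = k. if (\<Sum>x\<in>A. x ^ m) = b then of_nat CARD('a) else 0)"
    by (simp add: orthogonality)
  also have "\<dots> = of_nat CARD('a) * of_nat (card (power_sum_subsets m k b))"
    by (simp add: sum.If_cases power_sum_subsets_def Int_def conj_ac)
  finally show ?thesis ..
qed

definition gauss_sum_bound :: "nat \<Rightarrow> real" where
  "gauss_sum_bound i = (if CHAR('a) dvd i then real CARD('a) - 1 else real m * sqrt (real CARD('a)))"

lemma gauss_sum_bound_nonneg: "gauss_sum_bound i \<ge> 0"
  using CARD_field_ge_2[where 'a='a] by (simp add: gauss_sum_bound_def)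

lemma gauss_sum_of_nat_mult_CHAR_dvd:
  "CHAR('a) dvd i \<Longrightarrow> gauss_sum (of_nat i * c) = of_nat (CARD('a) - 1)"
  by (simp only: of_nat_eq_0_iff_char_dvd[symmetric] mult_zero_left gauss_sum_0)

lemma norm_gauss_sum_of_nat_mult_le:
  assumes "c \<noteq> 0"
  shows "cmod (gauss_sum (of_nat i * c)) \<le> gauss_sum_bound i"
proof (cases "CHAR('a) dvd i")
  case True
  then show ?thesis
    using CARD_field_ge_2[where 'a='a]
    by (simp only: gauss_sum_of_nat_mult_CHAR_dvd norm_of_nat) (simp add: gauss_sum_bound_def of_nat_diff)
next
  case False
  then have "of_nat i * c \<noteq> 0"
    using assms by (simp add: of_nat_eq_0_iff_char_dvd)
  then show ?thesis
    using False norm_gauss_sum_le unfolding gauss_sum_bound_def by simp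
qed

definition esym_growth :: real where
  "esym_growth = real m * sqrt (real CARD('a)) + (real CARD('a) - 1) / real CHAR('a)"

lemma esym_growth_ge_1: "esym_growth \<ge> 1"
proof -
  have "1 \<le> real m * sqrt (real CARD('a))"
    using m_pos CARD_field_ge_2[where 'a='a] by (simp add: mult_ge1_I)
  moreover have "(real CARD('a) - 1) / real CHAR('a) \<ge> 0"
    using CARD_field_ge_2[where 'a='a] by simp
  ultimately show ?thesis
    unfolding esym_growth_def by linarith
qed

lemma sum_gauss_sum_bound_mult_le:
  "(\<Sum>l<k. gauss_sum_bound (Suc l) * multichoose esym_growth (k - Suc l))
     \<le> real k * multichoose esym_growth k"
  using esym_growth_ge_1 CARD_field_ge_2[where 'a='a]
  unfolding esym_growth_def
  by (intro sum_mult_multichoose_le) (auto simp: gauss_sum_bound_def prime_gt_0_nat prime_CHAR_finite_field)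

lemma norm_esym_char_le:
  assumes "c \<noteq> 0"
  shows "cmod (esym_char k c) \<le> multichoose esym_growth k"
proof (induction k rule: less_induct)
  case (less k)
  have "real k * cmod (esym_char k c) = cmod (of_nat k * esym_char k c)"
    by (simp add: norm_mult)
  also have "\<dots> = cmod (\<Sum>l<k. (-1) ^ l * esym_char (k - Suc l) c * gauss_sum (of_nat (Suc l) * c))"
    by (simp only: newton_esym_char)
  also have "\<dots> \<le> (\<Sum>l<k. cmod (gauss_sum (of_nat (Suc l) * c)) * cmod (esym_char (k - Suc l) c))"
    by (rule order.trans[OF norm_sum]) (simp add: norm_mult norm_power mult.commute)
  also have "\<dots> \<le> (\<Sum>l<k. gauss_sum_bound (Suc l) * multichoose esym_growth (k - Suc l))"
    using less.IH norm_gauss_sum_of_nat_mult_le[OF assms] gauss_sum_bound_nonneg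
    by (intro sum_mono mult_mono) (auto simp del: of_nat_Suc)
  also have "\<dots> \<le> real k * multichoose esym_growth k"
    by (rule sum_gauss_sum_bound_mult_le)
  finally show ?case
    by (cases "k = 0") simp_all
qed

end

section \<open>Sums against a second Gauss sum\<close>

context power_character_sum
begin

lemma sum_gauss_sum_nonzero:
  assumes "b \<noteq> 0"
  shows "(\<Sum>c\<in>- {0}. gauss_sum (- (c * b))) = - of_nat (CARD('a) - 1)"
proof -
  have "(\<Sum>c\<in>- {0}. gauss_sum (- (c * b))) = (\<Sum>x\<in>- {0 :: 'a}. \<Sum>c\<in>- {0}. \<psi> (c * - (b * x ^ m)))"
    unfolding gauss_sum_def by (subst sum.swap) (simp add: algebra_simps)
  also have "\<dots> = (\<Sum>x\<in>- {0 :: 'a}. - 1)"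
    using assms by (intro sum.cong refl sum_nonzero_orthogonality) simp
  finally show ?thesis
    by (simp add: card_nonzero)
qed

lemma sum_norm_gauss_sum_mult_squared:
  assumes "u \<noteq> 0"
  shows "(\<Sum>c\<in>- {0}. (cmod (gauss_sum (u * c)))\<^sup>2) \<le> real CARD('a) * real m * (real CARD('a) - 1)"
proof -
  have "(\<Sum>c\<in>- {0}. (cmod (gauss_sum (u * c)))\<^sup>2) = (\<Sum>c\<in>- {0}. (cmod (gauss_sum c))\<^sup>2)"
    using assms by (rule sum_nonzero_mult_reindex)
  also have "\<dots> \<le> (\<Sum>c\<in>UNIV. (cmod (gauss_sum c))\<^sup>2)"
    by (intro sum_mono2) auto
  finally show ?thesis
    using sum_norm_gauss_sum_squared by linarith
qed

lemma m_sqrt_pos: "real m * sqrt (real CARD('a)) > 0"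
  using m_pos by simp

text \<open>A product of values \<open>gauss_sum (i c)\<close> is either constant on \<open>F\<^sup>*\<close> (all \<open>i\<close> divisible by
  \<open>p\<close>) or keeps one factor with \<open>i\<close> prime to \<open>p\<close>; for that factor its mean square, not its pointwise
  bound, is used at the end.\<close>
definition dominated :: "('a \<Rightarrow> complex) \<Rightarrow> real \<Rightarrow> bool" where
  "dominated \<Phi> \<beta> \<longleftrightarrow> \<beta> \<ge> 0 \<and>
     ((\<forall>c. c \<noteq> 0 \<longrightarrow> \<Phi> c = of_real \<beta>) \<or>
      (\<exists>i. \<not> CHAR('a) dvd i \<and> (\<forall>c. c \<noteq> 0 \<longrightarrow>
         cmod (\<Phi> c) \<le> \<beta> / (real m * sqrt (real CARD('a))) * cmod (gauss_sum (of_nat i * c)))))"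

lemma dominated_one: "dominated (\<lambda>_. 1) 1"
  by (simp add: dominated_def)

lemma dominated_mult_gauss_sum:
  assumes "dominated \<Phi> \<beta>"
  shows "dominated (\<lambda>c. \<Phi> c * gauss_sum (of_nat i * c)) (\<beta> * gauss_sum_bound i)"
proof -
  let ?C = "real m * sqrt (real CARD('a))"
  have \<beta>: "\<beta> \<ge> 0"
    using assms by (simp add: dominated_def)
  then have \<beta>': "\<beta> * gauss_sum_bound i \<ge> 0"
    by (simp add: gauss_sum_bound_nonneg)
  consider (const) "\<forall>c. c \<noteq> 0 \<longrightarrow> \<Phi> c = of_real \<beta>"
    | (gauss) j where "\<not> CHAR('a) dvd j"
        "\<forall>c. c \<noteq> 0 \<longrightarrow> cmod (\<Phi> c) \<le> \<beta> / ?C * cmod (gauss_sum (of_nat j * c))"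
    using assms unfolding dominated_def by blast
  then show ?thesis
  proof cases
    case const
    show ?thesis
    proof (cases "CHAR('a) dvd i")
      case True
      then have "\<Phi> c * gauss_sum (of_nat i * c) = of_real (\<beta> * gauss_sum_bound i)" if "c \<noteq> 0" for c
        using const that CARD_field_ge_2[where 'a='a]
        by (simp add: gauss_sum_of_nat_mult_CHAR_dvd gauss_sum_bound_def of_nat_diff)
      then show ?thesis
        using \<beta>' by (simp add: dominated_def)
    next
      case False
      then show ?thesis
        using const \<beta> m_sqrt_pos unfolding dominated_def
        by (auto simp: gauss_sum_bound_def norm_mult)
    qed
  next
    case gauss
    have "cmod (\<Phi> c * gauss_sum (of_nat i * c))
        \<le> \<beta> * gauss_sum_bound i / ?C * cmod (gauss_sum (of_nat j * c))" if "c \<noteq> 0" for c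
    proof -
      have "cmod (\<Phi> c * gauss_sum (of_nat i * c))
          \<le> (\<beta> / ?C * cmod (gauss_sum (of_nat j * c))) * gauss_sum_bound i"
        unfolding norm_mult using gauss(2) that norm_gauss_sum_of_nat_mult_le[OF that, of i] \<beta> m_sqrt_pos
        by (intro mult_mono) auto
      then show ?thesis
        by (simp add: mult_ac)
    qed
    then show ?thesis
      using \<beta>' gauss(1) unfolding dominated_def by blast
  qed
qed

lemma sum_norm_gauss_sum_products_le:
  assumes i: "\<not> CHAR('a) dvd i" and b: "b \<noteq> 0"
  shows "(\<Sum>c\<in>- {0}. cmod (gauss_sum (of_nat i * c)) * cmod (gauss_sum (- (c * b))))
           \<le> real CARD('a) * real m * (real CARD('a) - 1)"
proof -
  let ?A = "\<lambda>c. cmod (gauss_sum (of_nat i * c))" and ?B = "\<lambda>c. cmod (gauss_sum (- (c * b)))"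
  have "(\<Sum>c\<in>- {0}. ?A c * ?B c) \<le> (\<Sum>c\<in>- {0}. ((?A c)\<^sup>2 + (?B c)\<^sup>2) / 2)"
  proof (rule sum_mono)
    fix c :: 'a
    show "?A c * ?B c \<le> ((?A c)\<^sup>2 + (?B c)\<^sup>2) / 2"
      using sum_squares_bound[of "?A c" "?B c"] by simp
  qed
  also have "\<dots> = ((\<Sum>c\<in>- {0}. (?A c)\<^sup>2) + (\<Sum>c\<in>- {0}. (?B c)\<^sup>2)) / 2"
    by (simp only: sum_divide_distrib[symmetric] sum.distrib)
  also have "\<dots> \<le> real CARD('a) * real m * (real CARD('a) - 1)"
  proof -
    have "(\<Sum>c\<in>- {0}. (?A c)\<^sup>2) \<le> real CARD('a) * real m * (real CARD('a) - 1)"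
      using i by (intro sum_norm_gauss_sum_mult_squared) (simp add: of_nat_eq_0_iff_char_dvd)
    moreover have "(\<Sum>c\<in>- {0}. (?B c)\<^sup>2) \<le> real CARD('a) * real m * (real CARD('a) - 1)"
      using sum_norm_gauss_sum_mult_squared[of "- b"] b by (simp add: mult.commute)
    ultimately show ?thesis
      using add_mono by fastforce
  qed
  finally show ?thesis .
qed

lemma norm_sum_dominated_le:
  assumes b: "b \<noteq> 0" and "dominated \<Phi> \<beta>"
  shows "cmod (\<Sum>c\<in>- {0}. \<Phi> c * gauss_sum (- (c * b)))
           \<le> sqrt (real CARD('a)) * (real CARD('a) - 1) * \<beta>"
proof -
  let ?q = "real CARD('a)" and ?C = "real m * sqrt (real CARD('a))"
  have \<beta>: "\<beta> \<ge> 0" and q: "?q \<ge> 2"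
    using assms CARD_field_ge_2[where 'a='a] by (simp_all add: dominated_def)
  consider (const) "\<forall>c. c \<noteq> 0 \<longrightarrow> \<Phi> c = of_real \<beta>"
    | (gauss) i where "\<not> CHAR('a) dvd i"
        "\<forall>c. c \<noteq> 0 \<longrightarrow> cmod (\<Phi> c) \<le> \<beta> / ?C * cmod (gauss_sum (of_nat i * c))"
    using assms unfolding dominated_def by blast
  then show ?thesis
  proof cases
    case const
    then have "(\<Sum>c\<in>- {0}. \<Phi> c * gauss_sum (- (c * b))) = of_real \<beta> * - of_nat (CARD('a) - 1)"
      by (simp add: sum_distrib_left[symmetric] sum_gauss_sum_nonzero[OF b])
    then have "cmod (\<Sum>c\<in>- {0}. \<Phi> c * gauss_sum (- (c * b))) = \<beta> * real (CARD('a) - 1)"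
      using \<beta> by (simp only: norm_mult norm_minus_cancel norm_of_nat norm_of_real abs_of_nonneg)
    also have "\<dots> = 1 * (?q - 1) * \<beta>"
      using q by (simp add: of_nat_diff)
    also have "\<dots> \<le> sqrt ?q * (?q - 1) * \<beta>"
      using \<beta> q by (intro mult_right_mono) auto
    finally show ?thesis .
  next
    case gauss
    have "cmod (\<Sum>c\<in>- {0}. \<Phi> c * gauss_sum (- (c * b)))
        \<le> (\<Sum>c\<in>- {0}. \<beta> / ?C * cmod (gauss_sum (of_nat i * c)) * cmod (gauss_sum (- (c * b))))"
    proof (rule order.trans[OF norm_sum], rule sum_mono)
      fix c :: 'a assume "c \<in> - {0}"
      then have "cmod (\<Phi> c) \<le> \<beta> / ?C * cmod (gauss_sum (of_nat i * c))"
        using gauss(2) by simp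
      then show "cmod (\<Phi> c * gauss_sum (- (c * b)))
          \<le> \<beta> / ?C * cmod (gauss_sum (of_nat i * c)) * cmod (gauss_sum (- (c * b)))"
        unfolding norm_mult by (rule mult_right_mono) simp
    qed
    also have "\<dots> = \<beta> / ?C * (\<Sum>c\<in>- {0}. cmod (gauss_sum (of_nat i * c)) * cmod (gauss_sum (- (c * b))))"
      by (simp add: sum_distrib_left mult.assoc)
    also have "\<dots> \<le> \<beta> / ?C * (?q * real m * (?q - 1))"
      using sum_norm_gauss_sum_products_le[OF gauss(1) b] \<beta> m_sqrt_pos by (intro mult_left_mono) simp_all
    also have "\<dots> = sqrt ?q * (?q - 1) * \<beta>"
      using m_pos q by (simp add: field_simps real_sqrt_mult_self flip: real_sqrt_mult)
    finally show ?thesis .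
  qed
qed

lemma norm_sum_dominated_esym_le:
  assumes b: "b \<noteq> 0"
  shows "dominated \<Phi> \<beta> \<Longrightarrow> cmod (\<Sum>c\<in>- {0}. \<Phi> c * esym_char k c * gauss_sum (- (c * b)))
           \<le> sqrt (real CARD('a)) * (real CARD('a) - 1) * \<beta> * multichoose esym_growth k"
proof (induction k arbitrary: \<Phi> \<beta> rule: less_induct)
  case (less k)
  let ?K = "sqrt (real CARD('a)) * (real CARD('a) - 1)"
  let ?S = "\<lambda>l. \<Sum>c\<in>- {0}. (\<Phi> c * gauss_sum (of_nat (Suc l) * c)) * esym_char (k - Suc l) c * gauss_sum (- (c * b))"
  have K: "?K \<ge> 0" and \<beta>: "\<beta> \<ge> 0"
    using CARD_field_ge_2[where 'a='a] less.prems by (simp_all add: dominated_def)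
  have "real k * cmod (\<Sum>c\<in>- {0}. \<Phi> c * esym_char k c * gauss_sum (- (c * b)))
      = cmod (\<Sum>c\<in>- {0}. \<Phi> c * (of_nat k * esym_char k c) * gauss_sum (- (c * b)))"
    by (simp add: norm_mult sum_distrib_left[symmetric] mult_ac)
  also have "\<dots> = cmod (\<Sum>l<k. (-1) ^ l * ?S l)"
    unfolding newton_esym_char
    by (simp add: sum_distrib_left sum_distrib_right mult_ac sum.swap[where A = "- {0}"])
  also have "\<dots> \<le> (\<Sum>l<k. cmod (?S l))"
    by (rule order.trans[OF norm_sum]) (simp add: norm_mult norm_power)
  also have "\<dots> \<le> (\<Sum>l<k. ?K * (\<beta> * gauss_sum_bound (Suc l)) * multichoose esym_growth (k - Suc l))"
  proof (rule sum_mono)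
    fix l assume "l \<in> {..<k}"
    then show "cmod (?S l) \<le> ?K * (\<beta> * gauss_sum_bound (Suc l)) * multichoose esym_growth (k - Suc l)"
      using less.IH[of "k - Suc l"] dominated_mult_gauss_sum[OF less.prems, of "Suc l"] by simp
  qed
  also have "\<dots> = ?K * \<beta> * (\<Sum>l<k. gauss_sum_bound (Suc l) * multichoose esym_growth (k - Suc l))"
    by (simp add: sum_distrib_left mult_ac)
  also have "\<dots> \<le> ?K * \<beta> * (real k * multichoose esym_growth k)"
    using K \<beta> by (intro mult_left_mono sum_gauss_sum_bound_mult_le) auto
  finally show ?case
    using less.prems dominated_one norm_sum_dominated_le[OF b less.prems]
    by (cases "k = 0") (simp_all add: mult_ac)
qed

end

lemma abs_diff_divide_le_iff:
  fixes q :: real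
  assumes "q > 0"
  shows "\<bar>x - B / q\<bar> \<le> E \<longleftrightarrow> \<bar>q * x - B\<bar> \<le> q * E"
proof -
  have "q * \<bar>x - B / q\<bar> = \<bar>q * (x - B / q)\<bar>"
    using assms by (simp add: abs_mult)
  also have "q * (x - B / q) = q * x - B"
    using assms by (simp add: field_simps)
  finally have "\<bar>q * x - B\<bar> = q * \<bar>x - B / q\<bar>" ..
  then show ?thesis
    using assms by simp
qed

context power_character_sum
begin

lemma card_power_sum_subsets_zero_estimate:
  "\<bar>real (card (power_sum_subsets m k (0 :: 'a))) - real ((CARD('a) - 1) choose k) / real CARD('a)\<bar>
     \<le> multichoose esym_growth k"
proof -
  let ?n = "card (power_sum_subsets m k (0 :: 'a))" and ?q = "real CARD('a)"
    and ?B = "real ((CARD('a) - 1) choose k)"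
  have q: "?q \<ge> 2"
    using CARD_field_ge_2[where 'a='a] by simp
  have "of_nat CARD('a) * of_nat ?n = of_nat ((CARD('a) - 1) choose k) + (\<Sum>c\<in>- {0}. esym_char k c)"
    using card_power_sum_subsets_eq_sum[of k 0] sum_UNIV_split_zero[of "esym_char k"]
    by (simp add: esym_char_at_0)
  then have "complex_of_real (?q * real ?n - ?B) = (\<Sum>c\<in>- {0}. esym_char k c)"
    by simp
  then have "\<bar>?q * real ?n - ?B\<bar> = cmod (\<Sum>c\<in>- {0}. esym_char k c)"
    by (metis norm_of_real)
  also have "\<dots> \<le> (\<Sum>c\<in>- {0 :: 'a}. multichoose esym_growth k)"
    by (rule order.trans[OF norm_sum]) (intro sum_mono norm_esym_char_le, simp)
  also have "\<dots> = (?q - 1) * multichoose esym_growth k"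
    using q by (simp add: card_nonzero of_nat_diff)
  also have "\<dots> \<le> ?q * multichoose esym_growth k"
    using esym_growth_ge_1 multichoose_nonneg[of esym_growth k] by (intro mult_right_mono) simp_all
  finally show ?thesis
    using q by (simp add: abs_diff_divide_le_iff)
qed

text \<open>Averaging the count over the coset \<open>b (F\<^sup>*)\<^sup>m\<close>, on which it is constant, turns the character
  \<open>\<psi>(- c b)\<close> into the Gauss sum \<open>gauss_sum (- c b)\<close>.\<close>
lemma card_power_sum_subsets_nonzero_eq:
  fixes b :: 'a
  assumes "b \<noteq> 0"
  shows "complex_of_real ((real CARD('a) - 1) *
           (real CARD('a) * real (card (power_sum_subsets m k b)) - real ((CARD('a) - 1) choose k)))
         = (\<Sum>c\<in>- {0}. 1 * esym_char k c * gauss_sum (- (c * b)))"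
proof -
  let ?n = "\<lambda>b :: 'a. card (power_sum_subsets m k b)"
  let ?S = "\<Sum>c\<in>- {0}. 1 * esym_char k c * gauss_sum (- (c * b))"
  have "of_nat (CARD('a) - 1) * (of_nat CARD('a) * of_nat (?n b))
      = (\<Sum>t\<in>- {0 :: 'a}. of_nat CARD('a) * of_nat (?n b) :: complex)"
    by (simp add: card_nonzero)
  also have "\<dots> = (\<Sum>t\<in>- {0}. of_nat CARD('a) * of_nat (?n (t ^ m * b)))"
    by (intro sum.cong refl) (simp add: card_power_sum_subsets_mult_power)
  also have "\<dots> = (\<Sum>c\<in>UNIV. gauss_sum (- (c * b)) * esym_char k c)"
    unfolding card_power_sum_subsets_eq_sum gauss_sum_def
    by (subst sum.swap) (simp add: sum_distrib_left sum_distrib_right algebra_simps)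
  also have "\<dots> = of_nat (CARD('a) - 1) * of_nat ((CARD('a) - 1) choose k) + ?S"
    by (subst sum_UNIV_split_zero) (simp add: gauss_sum_0 esym_char_at_0 mult.commute)
  finally have count: "of_nat (CARD('a) - 1) * (of_nat CARD('a) * of_nat (?n b))
      = of_nat (CARD('a) - 1) * of_nat ((CARD('a) - 1) choose k) + ?S" .
  have "complex_of_real ((real CARD('a) - 1) * (real CARD('a) * real (?n b) - real ((CARD('a) - 1) choose k)))
      = of_nat (CARD('a) - 1) * (of_nat CARD('a) * of_nat (?n b))
        - of_nat (CARD('a) - 1) * of_nat ((CARD('a) - 1) choose k)"
    using CARD_field_ge_2[where 'a='a] by (simp add: of_nat_diff right_diff_distrib)
  also have "\<dots> = ?S"
    unfolding count by (rule add_diff_cancel_left')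
  finally show ?thesis .
qed

lemma card_power_sum_subsets_nonzero_estimate:
  fixes b :: 'a
  assumes b: "b \<noteq> 0"
  shows "\<bar>real (card (power_sum_subsets m k b)) - real ((CARD('a) - 1) choose k) / real CARD('a)\<bar>
     \<le> multichoose esym_growth k / sqrt (real CARD('a))"
proof -
  let ?n = "card (power_sum_subsets m k b)" and ?q = "real CARD('a)"
    and ?B = "real ((CARD('a) - 1) choose k)" and ?M = "multichoose esym_growth k"
  have q: "?q \<ge> 2"
    using CARD_field_ge_2[where 'a='a] by simp
  have "\<bar>(?q - 1) * (?q * real ?n - ?B)\<bar> = cmod (\<Sum>c\<in>- {0}. 1 * esym_char k c * gauss_sum (- (c * b)))"
    by (metis card_power_sum_subsets_nonzero_eq[OF b] norm_of_real)
  also have "\<dots> \<le> sqrt ?q * (?q - 1) * 1 * ?M"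
    by (rule norm_sum_dominated_esym_le[OF b dominated_one])
  finally have "(?q - 1) * \<bar>?q * real ?n - ?B\<bar> \<le> (?q - 1) * (sqrt ?q * ?M)"
    using q by (simp add: abs_mult mult.commute mult.left_commute)
  then have "\<bar>?q * real ?n - ?B\<bar> \<le> sqrt ?q * ?M"
    using q by simp
  also have "sqrt ?q * ?M = ?q * (?M / sqrt ?q)"
    by (simp add: real_div_sqrt flip: times_divide_eq_left)
  finally show ?thesis
    using q by (simp add: abs_diff_divide_le_iff)
qed

lemma pochhammer_esym_growth_le:
  "pochhammer esym_growth k
     \<le> falling_fact (real m * sqrt (real CARD('a)) + real k + real CARD('a) / real CHAR('a)) k"
proof -
  have "(real CARD('a) - 1) / real CHAR('a) \<le> real CARD('a) / real CHAR('a)"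
    by (simp add: divide_right_mono)
  then show ?thesis
    using esym_growth_ge_1 unfolding esym_growth_def by (intro pochhammer_le_falling_fact) auto
qed

lemma Nstar_estimate:
  fixes b :: 'a and k :: nat
  defines "F \<equiv> falling_fact (real m * sqrt (real CARD('a)) + real k + real CARD('a) / real CHAR('a)) k"
  shows "\<bar>real (Nstar m k b) - falling_fact (real CARD('a) - 1) k / real CARD('a)\<bar>
     \<le> (if b = 0 then 1 else 1 / sqrt (real CARD('a))) * F"
proof -
  let ?q = "real CARD('a)" and ?B = "real ((CARD('a) - 1) choose k)"
  have "falling_fact (?q - 1) k = fact k * ?B"
    using falling_fact_of_nat[of "CARD('a) - 1" k] CARD_field_ge_2[where 'a='a] by (simp add: of_nat_diff)
  then have "real (Nstar m k b) - falling_fact (?q - 1) k / ?q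
      = fact k * (real (card (power_sum_subsets m k b)) - ?B / ?q)"
    by (simp add: Nstar_eq_fact_mult_card right_diff_distrib)
  then have "\<bar>real (Nstar m k b) - falling_fact (?q - 1) k / ?q\<bar>
      = fact k * \<bar>real (card (power_sum_subsets m k b)) - ?B / ?q\<bar>"
    by (simp add: abs_mult)
  also have "\<dots> \<le> fact k * ((if b = 0 then 1 else 1 / sqrt ?q) * multichoose esym_growth k)"
    using card_power_sum_subsets_zero_estimate card_power_sum_subsets_nonzero_estimate
    by (intro mult_left_mono) auto
  also have "\<dots> = (if b = 0 then 1 else 1 / sqrt ?q) * pochhammer esym_growth k"
    by (simp add: multichoose_def)
  also have "\<dots> \<le> (if b = 0 then 1 else 1 / sqrt ?q) * F"
    unfolding F_def using pochhammer_esym_growth_le by (intro mult_left_mono) auto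
  finally show ?thesis .
qed

end

theorem mainTheorem3:
  fixes m k :: nat and b :: "'a::{finite,field}"
  defines "q \<equiv> CARD('a::{finite,field})" and "p \<equiv> CHAR('a::{finite,field})"
  assumes "m > 0" and "m dvd q - 1" and "k \<le> q - 1"
  shows "(b \<noteq> 0 \<longrightarrow>
      \<bar>real (Nstar m k b) - falling_fact (real q - 1) k / real q\<bar>
        \<le> 2 / sqrt (real q) * falling_fact (real m * sqrt (real q) + real k + real q / real p) k)
    \<and> (b = 0 \<longrightarrow>
      \<bar>real (Nstar m k b) - falling_fact (real q - 1) k / real q\<bar>
        \<le> falling_fact (real m * sqrt (real q) + real k + real q / real p) k)"
proof -
  obtain \<psi> :: "'a \<Rightarrow> complex" where "additive_character \<psi>"
    using exists_nontrivial_additive_character unfolding additive_character_def by blast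
  then interpret power_character_sum \<psi> m
    using \<open>m > 0\<close> by (simp add: power_character_sum_def power_character_sum_axioms_def)
  let ?F = "falling_fact (real m * sqrt (real q) + real k + real q / real p) k"
  have "0 \<le> ?F"
    using pochhammer_esym_growth_le[of k] pochhammer_nonneg[of esym_growth k] esym_growth_ge_1
    unfolding q_def p_def by linarith
  then have "1 / sqrt (real q) * ?F \<le> 2 / sqrt (real q) * ?F"
    by (intro mult_right_mono) (simp_all add: divide_right_mono)
  then show ?thesis
    using Nstar_estimate[of k b] unfolding q_def p_def by auto
qed

end
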